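(* Let $\nu$ be any probability measure on $\mathrm{U}(d)$ and $t$ a positive integer. Then $$\|T_\mu|_{\mathcal{H}_t}-T_\nu|_{\mathcal{H}_t}\|_\infty=\|T_{\mu,t}-T_{\nu,t}\|_\infty .$$
   Context: $\mu$ is the Haar probability measure on $\mathrm{U}(d)$. On $L^2(\mathrm{U}(d),\mu)$, for a probability measure $\nu$ define $(T_\nu F)(U)=\int\mathrm{d}\nu(V)\,F(V^{-1}U)$. $\mathcal{H}_t\subset L^2(\mathrm{U}(d))$ is the span of the functions $U\mapsto\mathrm{tr}(A\,U^{\otimes t}\otimes\bar U^{\otimes t})$, $A$ an operator on $(\mathbb{C}^d)^{\otimes 2t}$; it is invariant under $T_\nu$, and $T_\nu|_{\mathcal{H}_t}$ denotes the restriction. $T_{\nu,t}=\int\mathrm{d}\nu(U)\,U^{\otimes t}\otimes\bar U^{\otimes t}$ is the moment operator. $\|\cdot\|_\infty$ is the operator norm. *)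

theory Defs
  imports "HOL-Analysis.Analysis" "HOL-Probability.Probability"
begin

definition unitary_group :: "(complex^'n::finite^'n) set" where
  "unitary_group = {U. (\<chi> i j. cnj (U $ j $ i)) ** U = mat 1}"

definition prob_measure_U :: "(complex^'n::finite^'n) measure \<Rightarrow> bool" where
  "prob_measure_U \<nu> \<longleftrightarrow> prob_space \<nu> \<and> sets \<nu> = sets (restrict_space borel unitary_group)"

text \<open>Haar probability measure: a left-invariant Borel probability measure on U(d)
  (unique by the uniqueness of Haar measure on compact groups).\<close>
definition haar_measure_U :: "(complex^'n::finite^'n) measure \<Rightarrow> bool" where
  "haar_measure_U \<mu> \<longleftrightarrow> prob_measure_U \<mu> \<and>
     (\<forall>V\<in>unitary_group. \<forall>A\<in>sets \<mu>. emeasure \<mu> ((\<lambda>U. V ** U) ` A) = emeasure \<mu> A)"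

text \<open>Multi-indices for (C^d)^{\<otimes> 2t}: lists of length 2t.\<close>
definition multi_indices :: "nat \<Rightarrow> ('n::finite) list set" where
  "multi_indices t = {a. length a = 2 * t}"

text \<open>Matrix entries of U^{\<otimes>t} \<otimes> conj(U)^{\<otimes>t}.\<close>
definition tensor_entry :: "nat \<Rightarrow> complex^'n::finite^'n \<Rightarrow> 'n list \<Rightarrow> 'n list \<Rightarrow> complex" where
  "tensor_entry t U a b =
     (\<Prod>k<t. U $ (a ! k) $ (b ! k)) * (\<Prod>k<t. cnj (U $ (a ! (t + k)) $ (b ! (t + k))))"

definition moment_operator ::
  "(complex^'n::finite^'n) measure \<Rightarrow> nat \<Rightarrow> 'n list \<Rightarrow> 'n list \<Rightarrow> complex" where
  "moment_operator \<nu> t a b = (\<integral>U. tensor_entry t U a b \<partial>\<nu>)"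

definition mat_opnorm :: "'i set \<Rightarrow> ('i \<Rightarrow> 'i \<Rightarrow> complex) \<Rightarrow> real" where
  "mat_opnorm I A = Sup {sqrt (\<Sum>a\<in>I. (cmod (\<Sum>b\<in>I. A a b * x b))\<^sup>2) | x.
                           (\<Sum>b\<in>I. (cmod (x b))\<^sup>2) \<le> 1}"

text \<open>The space H_t: functions U \<mapsto> tr(A (U^{\<otimes>t} \<otimes> conj(U)^{\<otimes>t})).
  (This set is already a complex linear subspace, so it equals its span.)\<close>
definition H_space :: "nat \<Rightarrow> (complex^'n::finite^'n \<Rightarrow> complex) set" where
  "H_space t = {F. \<exists>A :: 'n list \<Rightarrow> 'n list \<Rightarrow> complex.
      F = (\<lambda>U. \<Sum>a\<in>multi_indices t. \<Sum>b\<in>multi_indices t. A a b * tensor_entry t U b a)}"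

definition conv_op ::
  "(complex^'n::finite^'n) measure \<Rightarrow> (complex^'n^'n \<Rightarrow> complex) \<Rightarrow> complex^'n^'n \<Rightarrow> complex" where
  "conv_op \<nu> F U = (\<integral>V. F (matrix_inv V ** U) \<partial>\<nu>)"

definition L2_norm :: "(complex^'n::finite^'n) measure \<Rightarrow> (complex^'n^'n \<Rightarrow> complex) \<Rightarrow> real" where
  "L2_norm \<mu> F = sqrt (\<integral>U. (cmod (F U))\<^sup>2 \<partial>\<mu>)"

definition restricted_diff_opnorm ::
  "(complex^'n::finite^'n) measure \<Rightarrow> (complex^'n^'n) measure \<Rightarrow> nat \<Rightarrow> real" where
  "restricted_diff_opnorm \<mu> \<nu> t =
     Sup {L2_norm \<mu> (\<lambda>U. conv_op \<mu> F U - conv_op \<nu> F U) | F. F \<in> H_space t \<and> L2_norm \<mu> F \<le> 1}"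

end

(* Write tau(U) = U^(x)t (x) conj(U)^(x)t. Every element of H_t is a coefficient function
   F_W(U) = sum_(a,c) conj(W a c) * tau(U) c a, and T_nu maps F_W to F_(W') where each row of W' is
   the corresponding row of W multiplied by the moment matrix T_(nu,t). So T_mu - T_nu acts on H_t
   through X = T_(mu,t) - T_(nu,t) acting on rows, and |F_W| in L2(mu) is a possibly degenerate
   Hermitian norm of W.

   Upper bound: left invariance of mu makes the row actions of tau(V) and tau(V)^* adjoint for the
   L2(mu) inner product; this survives averaging over V, so those of X and X^* are adjoint too. The
   power trick for the self-adjoint X^* X, fed only with the crude bound
   |F_W(U)| <= sum_a |row a of W|, yields |F_(X W)| <= |X| |F_W| without needing an orthonormal
   basis of H_t.

   Lower bound: since tau(U) is unitary, the matrices W_i with the single nonzero row x in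
   position i satisfy sum_i |F_(W_i)|^2 = |x|^2, and likewise for X x. For x nearly maximising
   |X x| / |x|, some W_i therefore nearly attains |X|. *)
theory Submission
  imports Defs
begin

definition mat_vec :: "'i set \<Rightarrow> ('i \<Rightarrow> 'i \<Rightarrow> complex) \<Rightarrow> ('i \<Rightarrow> complex) \<Rightarrow> 'i \<Rightarrow> complex" where
  "mat_vec I M x = (\<lambda>a. \<Sum>b\<in>I. M a b * x b)"

definition mat_adj :: "('i \<Rightarrow> 'i \<Rightarrow> complex) \<Rightarrow> 'i \<Rightarrow> 'i \<Rightarrow> complex" where
  "mat_adj M = (\<lambda>a b. cnj (M b a))"

definition vec_norm :: "'i set \<Rightarrow> ('i \<Rightarrow> complex) \<Rightarrow> real" where
  "vec_norm I x = L2_set (\<lambda>b. cmod (x b)) I"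

lemma vec_norm_nonneg [simp]: "0 \<le> vec_norm I x"
  unfolding vec_norm_def by simp

lemma mat_vec_scale: "mat_vec I M (\<lambda>b. c * x b) = (\<lambda>a. c * mat_vec I M x a)"
  unfolding mat_vec_def by (simp add: sum_distrib_left mult_ac)

lemma vec_norm_scale: "vec_norm I (\<lambda>b. c * x b) = cmod c * vec_norm I x"
  unfolding vec_norm_def by (simp add: norm_mult L2_set_right_distrib)

lemma mat_opnorm_altdef:
  "mat_opnorm I M = Sup {vec_norm I (mat_vec I M x) | x. vec_norm I x \<le> 1}"
  unfolding mat_opnorm_def vec_norm_def mat_vec_def L2_set_def by simp

lemma vec_norm_mat_vec_le_sum:
  assumes "finite I" "vec_norm I x \<le> 1"
  shows "vec_norm I (mat_vec I M x) \<le> (\<Sum>a\<in>I. \<Sum>b\<in>I. cmod (M a b))"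
proof -
  have "cmod (x b) \<le> 1" if "b \<in> I" for b
    using member_le_L2_set[OF assms(1) that, of "\<lambda>b. cmod (x b)"] assms(2)
    unfolding vec_norm_def by simp
  then have "cmod (mat_vec I M x a) \<le> (\<Sum>b\<in>I. cmod (M a b))" for a
    unfolding mat_vec_def
    by (intro order_trans[OF norm_sum] sum_mono) (auto simp: norm_mult intro: mult_left_le)
  then show ?thesis
    unfolding vec_norm_def by (intro order_trans[OF L2_set_le_sum] sum_mono) auto
qed

lemma vec_norm_mat_vec_le_mat_opnorm:
  assumes "finite I" "vec_norm I x \<le> 1"
  shows "vec_norm I (mat_vec I M x) \<le> mat_opnorm I M"
  unfolding mat_opnorm_altdef using assms vec_norm_mat_vec_le_sum
  by (intro cSup_upper bdd_aboveI[where M = "\<Sum>a\<in>I. \<Sum>b\<in>I. cmod (M a b)"]) auto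

lemma mat_opnorm_nonneg: "finite I \<Longrightarrow> 0 \<le> mat_opnorm I M"
  using vec_norm_mat_vec_le_mat_opnorm[of I "\<lambda>_. 0" M]
  by (simp add: vec_norm_def mat_vec_def L2_set_0')

lemma mat_opnorm_approx:
  assumes "e < mat_opnorm I M"
  obtains x where "vec_norm I x \<le> 1" "e < vec_norm I (mat_vec I M x)"
proof -
  let ?S = "{vec_norm I (mat_vec I M x) | x. vec_norm I x \<le> 1}"
  have "vec_norm I (mat_vec I M (\<lambda>_. 0)) \<in> ?S"
    by (intro CollectI exI[of _ "\<lambda>_. 0"]) (simp add: vec_norm_def L2_set_0')
  then have "?S \<noteq> {}"
    by (metis empty_iff)
  then obtain v where "v \<in> ?S" "e < v"
    using less_cSupD[of ?S e] assms unfolding mat_opnorm_altdef by blast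
  then show ?thesis
    using that by blast
qed

lemma vec_norm_mat_vec_le:
  assumes "finite I"
  shows "vec_norm I (mat_vec I M x) \<le> mat_opnorm I M * vec_norm I x"
proof (cases "vec_norm I x = 0")
  case True
  then have "mat_vec I M x = (\<lambda>_. 0)"
    using assms by (simp add: vec_norm_def L2_set_eq_0_iff mat_vec_def)
  then show ?thesis by (simp add: vec_norm_def L2_set_0' mat_opnorm_nonneg[OF assms])
next
  case False
  then have n: "vec_norm I x > 0"
    by (simp add: order_less_le vec_norm_def)
  have "vec_norm I (\<lambda>b. of_real (1 / vec_norm I x) * x b) = 1"
    using n by (subst vec_norm_scale) (simp add: norm_divide)
  then have "vec_norm I (mat_vec I M (\<lambda>b. of_real (1 / vec_norm I x) * x b)) \<le> mat_opnorm I M"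
    using assms by (intro vec_norm_mat_vec_le_mat_opnorm) simp_all
  then have "cmod (of_real (1 / vec_norm I x)) * vec_norm I (mat_vec I M x) \<le> mat_opnorm I M"
    by (simp only: mat_vec_scale vec_norm_scale)
  then show ?thesis
    using n by (simp add: norm_divide divide_le_eq mult.commute)
qed

lemma sum_mat_vec_adj_mult_cnj:
  "(\<Sum>b\<in>I. mat_vec I (mat_adj M) y b * cnj (z b)) = (\<Sum>a\<in>I. y a * cnj (mat_vec I M z a))"
proof -
  have "(\<Sum>b\<in>I. mat_vec I (mat_adj M) y b * cnj (z b)) = (\<Sum>b\<in>I. \<Sum>a\<in>I. y a * (cnj (M a b) * cnj (z b)))"
    unfolding mat_vec_def mat_adj_def by (simp add: sum_distrib_left sum_distrib_right mult_ac)
  also have "\<dots> = (\<Sum>a\<in>I. \<Sum>b\<in>I. y a * (cnj (M a b) * cnj (z b)))"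
    by (rule sum.swap)
  also have "\<dots> = (\<Sum>a\<in>I. y a * cnj (mat_vec I M z a))"
    unfolding mat_vec_def by (simp add: sum_distrib_left)
  finally show ?thesis .
qed

lemma vec_norm_mat_vec_adj_le:
  assumes "finite I"
  shows "vec_norm I (mat_vec I (mat_adj M) y) \<le> mat_opnorm I M * vec_norm I y"
proof -
  define z where "z = mat_vec I (mat_adj M) y"
  have "complex_of_real ((vec_norm I z)\<^sup>2) = (\<Sum>b\<in>I. z b * cnj (z b))"
    unfolding vec_norm_def L2_set_def by (simp add: sum_nonneg complex_norm_square del: of_real_power)
  also have "\<dots> = (\<Sum>a\<in>I. y a * cnj (mat_vec I M z a))"
    unfolding z_def by (rule sum_mat_vec_adj_mult_cnj)
  finally have "(vec_norm I z)\<^sup>2 = cmod (\<Sum>a\<in>I. y a * cnj (mat_vec I M z a))"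
    by (metis norm_of_real abs_power2)
  also have "\<dots> \<le> (\<Sum>a\<in>I. cmod (y a) * cmod (mat_vec I M z a))"
    by (rule order_trans[OF norm_sum]) (simp add: norm_mult)
  also have "\<dots> \<le> vec_norm I y * vec_norm I (mat_vec I M z)"
    using L2_set_mult_ineq[of "\<lambda>a. cmod (y a)" "\<lambda>a. cmod (mat_vec I M z a)" I] by (simp add: vec_norm_def)
  also have "\<dots> \<le> vec_norm I y * (mat_opnorm I M * vec_norm I z)"
    by (intro mult_left_mono vec_norm_mat_vec_le assms) (simp add: vec_norm_def)
  finally have "vec_norm I z * vec_norm I z \<le> (mat_opnorm I M * vec_norm I y) * vec_norm I z"
    by (simp add: power2_eq_square mult_ac)
  then have "vec_norm I z \<le> mat_opnorm I M * vec_norm I y"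
  proof (cases "vec_norm I z = 0")
    case True
    then show ?thesis using mat_opnorm_nonneg[OF assms] by simp
  next
    case False
    then show ?thesis
      using \<open>vec_norm I z * vec_norm I z \<le> _\<close> vec_norm_nonneg[of I z]
      by (simp add: mult_le_cancel_right)
  qed
  then show ?thesis unfolding z_def .
qed

section \<open>The unitary group and its tensor representation\<close>

definition mat_adjoint :: "complex^'n^'m \<Rightarrow> complex^'m^'n" where
  "mat_adjoint U = (\<chi> i j. cnj (U $ j $ i))"

lemma mat_adjoint_mat_adjoint [simp]: "mat_adjoint (mat_adjoint U) = U"
  unfolding mat_adjoint_def by (simp add: vec_eq_iff)

lemma mat_adjoint_mult: "mat_adjoint (U ** V) = mat_adjoint V ** mat_adjoint U"
  unfolding mat_adjoint_def by (simp add: vec_eq_iff matrix_matrix_mult_def mult.commute)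

lemma unitary_group_iff: "U \<in> unitary_group \<longleftrightarrow> mat_adjoint U ** U = mat 1"
  unfolding unitary_group_def mat_adjoint_def by simp

lemma unitary_mult_mat_adjoint: "U \<in> unitary_group \<Longrightarrow> U ** mat_adjoint U = mat 1"
  unfolding unitary_group_iff using matrix_left_right_inverse by blast

lemma mat_adjoint_in_unitary_group: "U \<in> unitary_group \<Longrightarrow> mat_adjoint U \<in> unitary_group"
  using unitary_mult_mat_adjoint unitary_group_iff by fastforce

lemma mult_in_unitary_group:
  "U \<in> unitary_group \<Longrightarrow> V \<in> unitary_group \<Longrightarrow> U ** V \<in> unitary_group"
proof -
  assume "U \<in> unitary_group" "V \<in> unitary_group"
  then have "mat_adjoint V ** ((mat_adjoint U ** U) ** V) = mat 1"
    by (simp add: unitary_group_iff)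
  then show ?thesis
    unfolding unitary_group_iff mat_adjoint_mult by (simp only: matrix_mul_assoc)
qed

lemma matrix_inv_unitary:
  assumes "U \<in> unitary_group"
  shows "matrix_inv U = mat_adjoint U"
proof -
  have inv: "U ** matrix_inv U = mat 1 \<and> matrix_inv U ** U = mat 1"
    unfolding matrix_inv_def
    by (rule someI[where x = "mat_adjoint U"])
       (simp add: unitary_mult_mat_adjoint[OF assms] assms[unfolded unitary_group_iff])
  have "matrix_inv U = matrix_inv U ** (U ** mat_adjoint U)"
    by (simp add: unitary_mult_mat_adjoint[OF assms])
  also have "\<dots> = (matrix_inv U ** U) ** mat_adjoint U"
    by (rule matrix_mul_assoc)
  also have "\<dots> = mat_adjoint U"
    using inv by simp
  finally show ?thesis .
qed

lemma norm_row_unitary: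
  assumes "U \<in> unitary_group"
  shows "norm (U $ i) = 1"
proof -
  have "complex_of_real ((norm (U $ i))\<^sup>2) = (U ** mat_adjoint U) $ i $ i"
    by (simp add: norm_vec_def L2_set_def sum_nonneg complex_norm_square matrix_matrix_mult_def
        mat_adjoint_def del: of_real_power)
  then have "(norm (U $ i))\<^sup>2 = 1"
    using unitary_mult_mat_adjoint[OF assms] by (simp add: mat_def del: of_real_power)
  then show ?thesis
    using norm_ge_zero[of "U $ i"] by (simp add: power2_eq_1_iff)
qed

lemma compact_unitary_group: "compact (unitary_group :: (complex^'n::finite^'n) set)"
proof -
  have "bounded (unitary_group :: (complex^'n^'n) set)"
    unfolding bounded_iff
  proof (intro exI ballI)
    fix U :: "complex^'n^'n"
    assume U: "U \<in> unitary_group"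
    have "norm U = L2_set (\<lambda>i. norm (U $ i)) UNIV"
      by (rule norm_vec_def)
    also have "\<dots> \<le> (\<Sum>i\<in>UNIV. norm (U $ i))"
      by (rule L2_set_le_sum) simp
    also have "\<dots> = CARD('n)"
      by (simp add: norm_row_unitary[OF U])
    finally show "norm U \<le> CARD('n)" .
  qed
  moreover have "closed (unitary_group :: (complex^'n^'n) set)"
    unfolding unitary_group_def matrix_matrix_mult_def
    by (intro closed_Collect_eq continuous_intros)
  ultimately show ?thesis
    by (simp add: compact_eq_bounded_closed)
qed

lemma continuous_on_left_mult [continuous_intros]:
  fixes V :: "'a::real_normed_algebra_1^'k^'m"
  shows "continuous_on S f \<Longrightarrow> continuous_on S (\<lambda>x. V ** f x)"
  unfolding matrix_matrix_mult_def by (intro continuous_intros)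

definition tensor_factor :: "nat \<Rightarrow> nat \<Rightarrow> complex^'n::finite^'n \<Rightarrow> 'n \<Rightarrow> 'n \<Rightarrow> complex" where
  "tensor_factor t k U i j = (if k < t then U $ i $ j else cnj (U $ i $ j))"

lemma prod_lessThan_double:
  fixes f :: "nat \<Rightarrow> 'a::comm_monoid_mult"
  shows "(\<Prod>k<2 * t. f k) = (\<Prod>k<t. f k) * (\<Prod>k<t. f (t + k))"
proof -
  have split: "{..<2 * t} = {..<t} \<union> {t..<t + t}"
    by auto
  have "(\<Prod>k<2 * t. f k) = (\<Prod>k<t. f k) * (\<Prod>k\<in>{t..<t + t}. f k)"
    unfolding split by (rule prod.union_disjoint) auto
  also have "(\<Prod>k\<in>{t..<t + t}. f k) = (\<Prod>k<t. f (t + k))"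
    using prod.shift_bounds_nat_ivl[of f 0 t t] by (simp add: atLeast0LessThan add.commute)
  finally show ?thesis .
qed

lemma tensor_entry_eq_prod: "tensor_entry t U a b = (\<Prod>k<2 * t. tensor_factor t k U (a ! k) (b ! k))"
  unfolding tensor_entry_def prod_lessThan_double tensor_factor_def by simp

lemma prod_sum_eq_sum_lists:
  fixes h :: "nat \<Rightarrow> 'n::finite \<Rightarrow> 'a::comm_semiring_1"
  shows "(\<Prod>k<n. \<Sum>l\<in>UNIV. h k l) = (\<Sum>c\<in>{c. length c = n}. \<Prod>k<n. h k (c ! k))"
proof (induction n arbitrary: h)
  case 0
  then show ?case by simp
next
  case (Suc n)
  have lists: "{c. length c = Suc n} = (\<lambda>(l, c). l # c) ` (UNIV \<times> {c. length c = n})"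
    by (auto simp: length_Suc_conv image_iff)
  have inj: "inj_on (\<lambda>(l, c). l # c) (UNIV \<times> {c :: 'n list. length c = n})"
    by (auto simp: inj_on_def)
  have "(\<Prod>k<Suc n. \<Sum>l\<in>UNIV. h k l) = (\<Sum>l\<in>UNIV. h 0 l) * (\<Prod>k<n. \<Sum>l\<in>UNIV. h (Suc k) l)"
    by (rule prod.lessThan_Suc_shift)
  also have "\<dots> = (\<Sum>(l, c)\<in>UNIV \<times> {c. length c = n}. h 0 l * (\<Prod>k<n. h (Suc k) (c ! k)))"
    using Suc[of "\<lambda>k. h (Suc k)"] by (simp add: sum_product sum.cartesian_product)
  also have "\<dots> = (\<Sum>(l, c)\<in>UNIV \<times> {c. length c = n}. \<Prod>k<Suc n. h k ((l # c) ! k))"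
    by (simp add: prod.lessThan_Suc_shift del: prod.lessThan_Suc)
  also have "\<dots> = (\<Sum>c\<in>{c. length c = Suc n}. \<Prod>k<Suc n. h k (c ! k))"
    unfolding lists by (subst sum.reindex[OF inj]) (simp add: case_prod_unfold)
  finally show ?case .
qed

lemma finite_multi_indices [simp]: "finite (multi_indices t :: 'n::finite list set)"
  unfolding multi_indices_def using finite_lists_length_eq[of "UNIV :: 'n set" "2 * t"] by simp

lemma tensor_factor_mult:
  "tensor_factor t k (U ** V) i j = (\<Sum>l\<in>UNIV. tensor_factor t k U i l * tensor_factor t k V l j)"
  unfolding tensor_factor_def by (simp add: matrix_matrix_mult_def)

lemma tensor_entry_mult:
  "tensor_entry t (U ** V) a b =
     (\<Sum>c\<in>multi_indices t. tensor_entry t U a c * tensor_entry t V c b)"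
proof -
  have "tensor_entry t (U ** V) a b =
      (\<Prod>k<2 * t. \<Sum>l\<in>UNIV. tensor_factor t k U (a ! k) l * tensor_factor t k V l (b ! k))"
    unfolding tensor_entry_eq_prod tensor_factor_mult ..
  also have "\<dots> = (\<Sum>c\<in>{c. length c = 2 * t}.
      \<Prod>k<2 * t. tensor_factor t k U (a ! k) (c ! k) * tensor_factor t k V (c ! k) (b ! k))"
    by (rule prod_sum_eq_sum_lists)
  also have "\<dots> = (\<Sum>c\<in>multi_indices t. tensor_entry t U a c * tensor_entry t V c b)"
    unfolding multi_indices_def tensor_entry_eq_prod by (simp add: prod.distrib)
  finally show ?thesis .
qed

lemma tensor_entry_mat_1:
  assumes "a \<in> multi_indices t" "b \<in> multi_indices t"
  shows "tensor_entry t (mat 1) a b = (if a = b then 1 else 0)"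
proof -
  have "tensor_entry t (mat 1) a b = (\<Prod>k<2 * t. if a ! k = b ! k then 1 else 0)"
    unfolding tensor_entry_eq_prod tensor_factor_def by (intro prod.cong) (auto simp: mat_def)
  also have "\<dots> = (if a = b then 1 else 0)"
    using assms by (auto simp: multi_indices_def list_eq_iff_nth_eq)
  finally show ?thesis .
qed

lemma tensor_entry_mat_adjoint: "tensor_entry t (mat_adjoint U) a b = cnj (tensor_entry t U b a)"
  unfolding tensor_entry_def mat_adjoint_def by simp

lemma tensor_entry_unitary_columns:
  assumes "U \<in> unitary_group" "a \<in> multi_indices t" "b \<in> multi_indices t"
  shows "(\<Sum>c\<in>multi_indices t. cnj (tensor_entry t U c a) * tensor_entry t U c b) =
           (if a = b then 1 else 0)"
  using tensor_entry_mult[of t "mat_adjoint U" U a b] tensor_entry_mat_1[OF assms(2,3)] assms(1)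
  by (simp add: tensor_entry_mat_adjoint unitary_group_iff)

lemma tensor_entry_unitary_rows:
  assumes "U \<in> unitary_group" "a \<in> multi_indices t" "b \<in> multi_indices t"
  shows "(\<Sum>c\<in>multi_indices t. tensor_entry t U a c * cnj (tensor_entry t U b c)) =
           (if a = b then 1 else 0)"
  using tensor_entry_mult[of t U "mat_adjoint U" a b] tensor_entry_mat_1[OF assms(2,3)]
    unitary_mult_mat_adjoint[OF assms(1)]
  by (simp add: tensor_entry_mat_adjoint)

lemma continuous_on_tensor_entry [continuous_intros]:
  "continuous_on S f \<Longrightarrow> continuous_on S (\<lambda>x. tensor_entry t (f x) a b)"
  unfolding tensor_entry_def by (intro continuous_intros)

lemma haar_measure_U_imp_prob_measure_U: "haar_measure_U \<mu> \<Longrightarrow> prob_measure_U \<mu>"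
  unfolding haar_measure_U_def by simp

lemma space_prob_measure_U: "prob_measure_U M \<Longrightarrow> space M = unitary_group"
  unfolding prob_measure_U_def
  by (metis sets_eq_imp_space_eq space_restrict_space space_borel Int_UNIV_right)

lemma measurable_continuous_unitary:
  assumes "prob_measure_U M" "continuous_on UNIV f"
  shows "f \<in> borel_measurable M"
proof -
  have "f \<in> borel_measurable (restrict_space borel unitary_group)"
    by (rule measurable_restrict_space1) (rule borel_measurable_continuous_onI[OF assms(2)])
  then show ?thesis
    using assms(1) measurable_cong_sets unfolding prob_measure_U_def by blast
qed

lemma integrable_continuous_unitary:
  fixes f :: "complex^'n::finite^'n \<Rightarrow> 'b::{banach,second_countable_topology}"
  assumes "prob_measure_U M" "continuous_on UNIV f"
  shows "integrable M f"
proof -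
  interpret prob_space M
    using assms(1) unfolding prob_measure_U_def by simp
  have "compact (f ` unitary_group)"
    using compact_unitary_group by (intro compact_continuous_image continuous_on_subset[OF assms(2)]) auto
  then obtain B where "\<forall>y\<in>f ` unitary_group. norm y \<le> B"
    using compact_imp_bounded bounded_iff by metis
  then show ?thesis
    by (intro integrable_const_bound[where B = B] AE_I2 measurable_continuous_unitary assms)
       (simp add: space_prob_measure_U[OF assms(1)])
qed

lemma measurable_left_mult_unitary:
  fixes V :: "complex^'n::finite^'n"
  assumes "prob_measure_U M" "V \<in> unitary_group"
  shows "(\<lambda>U. V ** U) \<in> measurable M M"
proof -
  have "continuous_on UNIV (\<lambda>U :: complex^'n^'n. V ** U)"
    by (intro continuous_intros)
  then have "(\<lambda>U. V ** U) \<in> measurable (restrict_space borel unitary_group) (restrict_space borel unitary_group)"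
    using assms(2) mult_in_unitary_group
    by (intro measurable_restrict_space3 borel_measurable_continuous_onI) auto
  then show ?thesis
    using assms(1) measurable_cong_sets unfolding prob_measure_U_def by blast
qed

lemma integral_left_mult_haar:
  fixes f :: "complex^'n::finite^'n \<Rightarrow> 'b::{banach,second_countable_topology}"
  assumes "haar_measure_U \<mu>" "V \<in> unitary_group" "f \<in> borel_measurable \<mu>"
  shows "(\<integral>U. f (V ** U) \<partial>\<mu>) = integral\<^sup>L \<mu> f"
proof -
  have pm: "prob_measure_U \<mu>"
    using assms(1) by (rule haar_measure_U_imp_prob_measure_U)
  note meas = measurable_left_mult_unitary[OF pm assms(2)]
  have cancel: "mat_adjoint V ** (V ** W) = W" "V ** (mat_adjoint V ** W) = W" for W
    using assms(2) unitary_mult_mat_adjoint[OF assms(2)]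
    by (simp_all add: matrix_mul_assoc unitary_group_iff)
  have "distr \<mu> \<mu> (\<lambda>U. V ** U) = \<mu>"
  proof (rule measure_eqI)
    fix A assume "A \<in> sets (distr \<mu> \<mu> (\<lambda>U. V ** U))"
    then have A: "A \<in> sets \<mu>"
      by simp
    then have A_sub: "A \<subseteq> unitary_group"
      using sets.sets_into_space space_prob_measure_U[OF pm] by blast
    have "(\<lambda>U. V ** U) -` A \<inter> space \<mu> = (\<lambda>U. mat_adjoint V ** U) ` A"
    proof (intro equalityI subsetI)
      fix U assume "U \<in> (\<lambda>U. V ** U) -` A \<inter> space \<mu>"
      then show "U \<in> (\<lambda>U. mat_adjoint V ** U) ` A"
        using cancel(1)[of U] by (intro image_eqI[of _ _ "V ** U"]) auto
    next
      fix U assume "U \<in> (\<lambda>U. mat_adjoint V ** U) ` A"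
      then obtain W where "W \<in> A" "U = mat_adjoint V ** W"
        by blast
      then show "U \<in> (\<lambda>U. V ** U) -` A \<inter> space \<mu>"
        using A_sub cancel(2)[of W] mult_in_unitary_group[OF mat_adjoint_in_unitary_group[OF assms(2)]]
        by (auto simp: space_prob_measure_U[OF pm])
    qed
    then show "emeasure (distr \<mu> \<mu> (\<lambda>U. V ** U)) A = emeasure \<mu> A"
      using assms(1) mat_adjoint_in_unitary_group[OF assms(2)] A
      unfolding haar_measure_U_def by (simp add: emeasure_distr[OF meas A])
  qed simp
  then show ?thesis
    using integral_distr[OF meas assms(3)] by simp
qed

section \<open>Coefficient functions of the tensor representation\<close>

(* F(U) = tr (A tau(U)) with A = conj W: with the conjugate, T_nu acts on the rows of W through
   T_(nu,t) itself (see conv_op_coeff_fun). *)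
definition coeff_fun :: "nat \<Rightarrow> ('n::finite list \<Rightarrow> 'n list \<Rightarrow> complex) \<Rightarrow> complex^'n^'n \<Rightarrow> complex" where
  "coeff_fun t W U =
     (\<Sum>a\<in>multi_indices t. \<Sum>c\<in>multi_indices t. cnj (W a c) * tensor_entry t U c a)"

definition coeff_fun_entry ::
  "nat \<Rightarrow> ('n::finite list \<Rightarrow> 'n list \<Rightarrow> complex) \<Rightarrow> 'n list \<Rightarrow> 'n list \<Rightarrow> complex^'n^'n \<Rightarrow> complex" where
  "coeff_fun_entry t W c b U = (\<Sum>a\<in>multi_indices t. cnj (W a b) * tensor_entry t U c a)"

definition apply_rows :: "nat \<Rightarrow> ('n list \<Rightarrow> 'n list \<Rightarrow> complex) \<Rightarrow>
    ('n::finite list \<Rightarrow> 'n list \<Rightarrow> complex) \<Rightarrow> 'n list \<Rightarrow> 'n list \<Rightarrow> complex" where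
  "apply_rows t M W = (\<lambda>a. mat_vec (multi_indices t) M (W a))"

lemma H_space_eq_range: "H_space t = range (coeff_fun t)"
proof (intro equalityI subsetI)
  fix F assume "F \<in> H_space t"
  then obtain A where "F = (\<lambda>U. \<Sum>a\<in>multi_indices t. \<Sum>b\<in>multi_indices t. A a b * tensor_entry t U b a)"
    unfolding H_space_def by blast
  then have "F = coeff_fun t (\<lambda>a b. cnj (A a b))"
    unfolding coeff_fun_def by simp
  then show "F \<in> range (coeff_fun t)"
    by blast
next
  fix F assume "F \<in> range (coeff_fun t)"
  then obtain W where "F = coeff_fun t W"
    by blast
  then show "F \<in> H_space t"
    unfolding H_space_def coeff_fun_def by (intro CollectI exI[of _ "\<lambda>a b. cnj (W a b)"]) simp
qed

lemma continuous_on_coeff_fun [continuous_intros]: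
  "continuous_on S f \<Longrightarrow> continuous_on S (\<lambda>x. coeff_fun t W (f x))"
  unfolding coeff_fun_def tensor_entry_def by (intro continuous_intros)

lemma continuous_on_coeff_fun_entry [continuous_intros]:
  "continuous_on S f \<Longrightarrow> continuous_on S (\<lambda>x. coeff_fun_entry t W c b (f x))"
  unfolding coeff_fun_entry_def tensor_entry_def by (intro continuous_intros)

lemma coeff_fun_apply_rows:
  "coeff_fun t (apply_rows t M W) U =
     (\<Sum>c\<in>multi_indices t. \<Sum>b\<in>multi_indices t. cnj (M c b) * coeff_fun_entry t W c b U)"
proof -
  let ?I = "multi_indices t"
  have "coeff_fun t (apply_rows t M W) U =
      (\<Sum>a\<in>?I. \<Sum>c\<in>?I. \<Sum>b\<in>?I. cnj (M c b) * (cnj (W a b) * tensor_entry t U c a))"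
    unfolding coeff_fun_def apply_rows_def mat_vec_def by (simp add: sum_distrib_right mult.assoc)
  also have "\<dots> = (\<Sum>c\<in>?I. \<Sum>b\<in>?I. \<Sum>a\<in>?I. cnj (M c b) * (cnj (W a b) * tensor_entry t U c a))"
    by (subst sum.swap) (rule sum.cong[OF refl], rule sum.swap)
  also have "\<dots> = (\<Sum>c\<in>?I. \<Sum>b\<in>?I. cnj (M c b) * coeff_fun_entry t W c b U)"
    unfolding coeff_fun_entry_def by (simp add: sum_distrib_left)
  finally show ?thesis .
qed

lemma coeff_fun_left_mult:
  "coeff_fun t W (V ** U) = coeff_fun t (apply_rows t (mat_adj (tensor_entry t V)) W) U"
proof -
  let ?I = "multi_indices t"
  have "coeff_fun t W (V ** U) =
      (\<Sum>a\<in>?I. \<Sum>c\<in>?I. \<Sum>d\<in>?I. cnj (W a c) * (tensor_entry t V c d * tensor_entry t U d a))"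
    unfolding coeff_fun_def tensor_entry_mult by (simp add: sum_distrib_left)
  also have "\<dots> = (\<Sum>a\<in>?I. \<Sum>d\<in>?I. \<Sum>c\<in>?I. cnj (W a c) * (tensor_entry t V c d * tensor_entry t U d a))"
    by (rule sum.cong[OF refl], rule sum.swap)
  also have "\<dots> = coeff_fun t (apply_rows t (mat_adj (tensor_entry t V)) W) U"
    unfolding coeff_fun_def apply_rows_def mat_vec_def mat_adj_def
    by (simp add: sum_distrib_left sum_distrib_right mult_ac)
  finally show ?thesis .
qed

lemma coeff_fun_mat_adjoint_mult:
  "coeff_fun t W (mat_adjoint V ** U) = coeff_fun t (apply_rows t (tensor_entry t V) W) U"
proof -
  have "mat_adj (tensor_entry t (mat_adjoint V)) = tensor_entry t V"
    by (simp add: mat_adj_def tensor_entry_mat_adjoint)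
  then show ?thesis
    by (simp add: coeff_fun_left_mult)
qed

lemma coeff_fun_apply_rows_diff:
  "coeff_fun t (apply_rows t (\<lambda>a b. M a b - N a b) W) U =
     coeff_fun t (apply_rows t M W) U - coeff_fun t (apply_rows t N W) U"
  unfolding coeff_fun_apply_rows by (simp add: algebra_simps sum_subtractf)

lemma coeff_fun_scale: "coeff_fun t (\<lambda>a b. of_real r * W a b) = (\<lambda>U. of_real r * coeff_fun t W U)"
  unfolding coeff_fun_def by (simp add: sum_distrib_left mult_ac)

lemma apply_rows_scale: "apply_rows t M (\<lambda>a b. c * W a b) = (\<lambda>a b. c * apply_rows t M W a b)"
  unfolding apply_rows_def by (simp add: mat_vec_scale)

lemma integral_moment_combination:
  assumes "prob_measure_U \<nu>" "finite I"
  shows "(\<integral>V. (\<Sum>c\<in>I. \<Sum>b\<in>I. cnj (tensor_entry t V c b) * D c b) \<partial>\<nu>) =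
           (\<Sum>c\<in>I. \<Sum>b\<in>I. cnj (moment_operator \<nu> t c b) * D c b)"
proof -
  have int: "integrable \<nu> (\<lambda>V. cnj (tensor_entry t V c b) * D c b)" for c b
    using assms(1) by (intro integrable_continuous_unitary continuous_intros)
  show ?thesis
    unfolding moment_operator_def using int
    by (simp add: Bochner_Integration.integral_sum integrable_sum)
qed

lemma conv_op_coeff_fun:
  assumes "prob_measure_U \<nu>"
  shows "conv_op \<nu> (coeff_fun t W) = coeff_fun t (apply_rows t (moment_operator \<nu> t) W)"
proof
  fix U
  have "conv_op \<nu> (coeff_fun t W) U = (\<integral>V. (\<Sum>c\<in>multi_indices t. \<Sum>b\<in>multi_indices t.
           cnj (tensor_entry t V c b) * coeff_fun_entry t W c b U) \<partial>\<nu>)"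
    unfolding conv_op_def
    by (intro Bochner_Integration.integral_cong refl)
       (simp add: space_prob_measure_U[OF assms] matrix_inv_unitary coeff_fun_mat_adjoint_mult
         coeff_fun_apply_rows)
  also have "\<dots> = coeff_fun t (apply_rows t (moment_operator \<nu> t) W) U"
    by (simp add: integral_moment_combination[OF assms] coeff_fun_apply_rows)
  finally show "conv_op \<nu> (coeff_fun t W) U = coeff_fun t (apply_rows t (moment_operator \<nu> t) W) U" .
qed

lemma integral_Cauchy_Schwarz:
  fixes f g :: "'a \<Rightarrow> real"
  assumes f: "integrable M (\<lambda>x. (f x)\<^sup>2)" "f \<in> borel_measurable M" "\<And>x. f x \<ge> 0"
    and g: "integrable M (\<lambda>x. (g x)\<^sup>2)" "g \<in> borel_measurable M" "\<And>x. g x \<ge> 0"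
    and fg: "integrable M (\<lambda>x. f x * g x)"
  shows "(\<integral>x. f x * g x \<partial>M)\<^sup>2 \<le> (\<integral>x. (f x)\<^sup>2 \<partial>M) * (\<integral>x. (g x)\<^sup>2 \<partial>M)"
proof -
  have nn: "(\<integral>\<^sup>+x. ennreal (h x) \<partial>M) = ennreal (\<integral>x. h x \<partial>M)"
    if "integrable M h" "\<And>x. h x \<ge> 0" for h
    using that by (intro nn_integral_eq_integral) auto
  have "ennreal ((\<integral>x. f x * g x \<partial>M)\<^sup>2) = (\<integral>\<^sup>+x. ennreal (f x) * ennreal (g x) \<partial>M)\<^sup>2"
    using f g nn[OF fg]
    by (simp add: ennreal_mult[symmetric] ennreal_power[symmetric] integral_nonneg_AE)
  also have "\<dots> \<le> (\<integral>\<^sup>+x. ennreal (f x) ^ 2 \<partial>M) * (\<integral>\<^sup>+x. ennreal (g x) ^ 2 \<partial>M)"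
    using f g by (intro Cauchy_Schwarz_nn_integral) auto
  also have "\<dots> = ennreal ((\<integral>x. (f x)\<^sup>2 \<partial>M) * (\<integral>x. (g x)\<^sup>2 \<partial>M))"
    using f g nn[OF f(1)] nn[OF g(1)] by (simp add: ennreal_power ennreal_mult)
  finally show ?thesis
    using f g by simp
qed

definition L2_inner :: "'a measure \<Rightarrow> ('a \<Rightarrow> complex) \<Rightarrow> ('a \<Rightarrow> complex) \<Rightarrow> complex" where
  "L2_inner M F G = (\<integral>x. F x * cnj (G x) \<partial>M)"

lemma L2_inner_cnj: "L2_inner M F G = cnj (L2_inner M G F)"
  unfolding L2_inner_def Bochner_Integration.integral_cnj[symmetric] by (simp add: mult.commute)

lemma L2_norm_nonneg [simp]: "0 \<le> L2_norm M F"
  unfolding L2_norm_def by simp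

lemma L2_norm_power2: "(L2_norm M F)\<^sup>2 = (\<integral>x. (cmod (F x))\<^sup>2 \<partial>M)"
  unfolding L2_norm_def by (simp add: integral_nonneg_AE)

lemma L2_inner_self: "L2_inner M F F = of_real ((L2_norm M F)\<^sup>2)"
  unfolding L2_inner_def L2_norm_power2
  by (simp add: complex_norm_square[symmetric] del: of_real_power)

lemma L2_norm_scale: "L2_norm M (\<lambda>x. c * F x) = cmod c * L2_norm M F"
  unfolding L2_norm_def by (simp add: norm_mult power_mult_distrib real_sqrt_mult)

lemma cmod_L2_inner_le:
  assumes "prob_measure_U M" "continuous_on UNIV F" "continuous_on UNIV G"
  shows "cmod (L2_inner M F G) \<le> L2_norm M F * L2_norm M G"
proof -
  have "cmod (L2_inner M F G) \<le> (\<integral>U. cmod (F U) * cmod (G U) \<partial>M)"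
    unfolding L2_inner_def using integral_norm_bound[of M "\<lambda>U. F U * cnj (G U)"]
    by (simp add: norm_mult)
  also have "\<dots> \<le> sqrt ((\<integral>U. (cmod (F U))\<^sup>2 \<partial>M) * (\<integral>U. (cmod (G U))\<^sup>2 \<partial>M))"
    using assms
    by (intro real_le_rsqrt integral_Cauchy_Schwarz integrable_continuous_unitary
        measurable_continuous_unitary continuous_intros) auto
  also have "\<dots> = L2_norm M F * L2_norm M G"
    unfolding L2_norm_def by (simp add: real_sqrt_mult)
  finally show ?thesis .
qed

lemma L2_norm_le_bound:
  assumes "prob_measure_U M" "continuous_on UNIV F" "0 \<le> B"
    and "\<And>U. U \<in> unitary_group \<Longrightarrow> cmod (F U) \<le> B"
  shows "L2_norm M F \<le> B"
proof -
  interpret prob_space M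
    using assms(1) unfolding prob_measure_U_def by simp
  have "(\<integral>U. (cmod (F U))\<^sup>2 \<partial>M) \<le> B\<^sup>2"
    using assms
    by (intro integral_le_const AE_I2 integrable_continuous_unitary continuous_intros power_mono)
       (auto simp: space_prob_measure_U)
  then show ?thesis
    unfolding L2_norm_def using assms(3) by (rule real_le_lsqrt[rotated])
qed

lemma vec_norm_tensor_entry_column:
  assumes "U \<in> unitary_group" "a \<in> multi_indices t"
  shows "vec_norm (multi_indices t) (\<lambda>c. tensor_entry t U c a) = 1"
proof -
  have "complex_of_real ((vec_norm (multi_indices t) (\<lambda>c. tensor_entry t U c a))\<^sup>2) =
      (\<Sum>c\<in>multi_indices t. cnj (tensor_entry t U c a) * tensor_entry t U c a)"
    unfolding vec_norm_def L2_set_def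
    by (simp add: sum_nonneg complex_norm_square mult.commute del: of_real_power)
  then have "(vec_norm (multi_indices t) (\<lambda>c. tensor_entry t U c a))\<^sup>2 = 1"
    using tensor_entry_unitary_columns[OF assms(1,2,2)] by (simp del: of_real_power)
  then show ?thesis
    using vec_norm_nonneg[of "multi_indices t" "\<lambda>c. tensor_entry t U c a"]
    by (auto simp: power2_eq_1_iff)
qed

lemma cmod_coeff_fun_le:
  fixes U :: "complex^'n::finite^'n"
  assumes "U \<in> unitary_group"
  shows "cmod (coeff_fun t W U) \<le> (\<Sum>a\<in>multi_indices t. vec_norm (multi_indices t) (W a))"
  unfolding coeff_fun_def
proof (rule order_trans[OF norm_sum sum_mono])
  fix a :: "'n list"
  assume a: "a \<in> multi_indices t"
  have "cmod (\<Sum>c\<in>multi_indices t. cnj (W a c) * tensor_entry t U c a) \<le>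
      (\<Sum>c\<in>multi_indices t. cmod (W a c) * cmod (tensor_entry t U c a))"
    by (rule order_trans[OF norm_sum]) (simp add: norm_mult)
  also have "\<dots> \<le> vec_norm (multi_indices t) (W a) * vec_norm (multi_indices t) (\<lambda>c. tensor_entry t U c a)"
    using L2_set_mult_ineq[of "\<lambda>c. cmod (W a c)" "\<lambda>c. cmod (tensor_entry t U c a)"]
    by (simp add: vec_norm_def)
  finally show "cmod (\<Sum>c\<in>multi_indices t. cnj (W a c) * tensor_entry t U c a) \<le> vec_norm (multi_indices t) (W a)"
    by (simp add: vec_norm_tensor_entry_column[OF assms a])
qed

lemma L2_norm_coeff_fun_le:
  assumes "prob_measure_U M"
  shows "L2_norm M (coeff_fun t W) \<le> (\<Sum>a\<in>multi_indices t. vec_norm (multi_indices t) (W a))"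
  using assms cmod_coeff_fun_le
  by (intro L2_norm_le_bound continuous_intros sum_nonneg vec_norm_nonneg) auto

definition mat_adj_is_L2_adjoint ::
  "(complex^'n^'n) measure \<Rightarrow> nat \<Rightarrow> ('n::finite list \<Rightarrow> 'n list \<Rightarrow> complex) \<Rightarrow> bool" where
  "mat_adj_is_L2_adjoint \<mu> t X \<longleftrightarrow> (\<forall>Y Z.
     L2_inner \<mu> (coeff_fun t (apply_rows t X Y)) (coeff_fun t Z) =
     L2_inner \<mu> (coeff_fun t Y) (coeff_fun t (apply_rows t (mat_adj X) Z)))"

lemma mat_adj_is_L2_adjoint_tensor_entry:
  assumes "haar_measure_U \<mu>" "V \<in> unitary_group"
  shows "mat_adj_is_L2_adjoint \<mu> t (tensor_entry t V)"
  unfolding mat_adj_is_L2_adjoint_def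
proof (intro allI)
  fix Y Z
  define f where "f U = coeff_fun t Y (mat_adjoint V ** U) * cnj (coeff_fun t Z U)" for U
  have meas: "f \<in> borel_measurable \<mu>"
    unfolding f_def using haar_measure_U_imp_prob_measure_U[OF assms(1)]
    by (intro measurable_continuous_unitary continuous_intros)
  have "(\<integral>U. f U \<partial>\<mu>) = (\<integral>U. f (V ** U) \<partial>\<mu>)"
    by (rule integral_left_mult_haar[OF assms meas, symmetric])
  also have "\<dots> = (\<integral>U. coeff_fun t Y U * cnj (coeff_fun t Z (V ** U)) \<partial>\<mu>)"
    using assms(2) by (simp add: f_def matrix_mul_assoc unitary_group_iff)
  finally have "(\<integral>U. f U \<partial>\<mu>) = (\<integral>U. coeff_fun t Y U * cnj (coeff_fun t Z (V ** U)) \<partial>\<mu>)" .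
  then show "L2_inner \<mu> (coeff_fun t (apply_rows t (tensor_entry t V) Y)) (coeff_fun t Z) =
      L2_inner \<mu> (coeff_fun t Y) (coeff_fun t (apply_rows t (mat_adj (tensor_entry t V)) Z))"
    unfolding L2_inner_def f_def coeff_fun_mat_adjoint_mult by (simp add: coeff_fun_left_mult)
qed

lemma L2_inner_apply_rows_defect:
  assumes "prob_measure_U \<mu>"
  shows "L2_inner \<mu> (coeff_fun t (apply_rows t M Y)) (coeff_fun t Z) -
           L2_inner \<mu> (coeff_fun t Y) (coeff_fun t (apply_rows t (mat_adj M) Z)) =
         (\<Sum>c\<in>multi_indices t. \<Sum>b\<in>multi_indices t. cnj (M c b) *
           (L2_inner \<mu> (coeff_fun_entry t Y c b) (coeff_fun t Z) -
            L2_inner \<mu> (coeff_fun t Y) (coeff_fun_entry t Z b c)))"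
proof -
  let ?I = "multi_indices t"
  have int: "integrable \<mu> (\<lambda>U. cnj (M c b) * (coeff_fun_entry t Y c b U * cnj (coeff_fun t Z U)))"
    "integrable \<mu> (\<lambda>U. cnj (M c b) * (coeff_fun t Y U * cnj (coeff_fun_entry t Z b c U)))" for c b
    by (intro integrable_continuous_unitary[OF assms] continuous_intros)+
  have "L2_inner \<mu> (coeff_fun t (apply_rows t M Y)) (coeff_fun t Z) =
      (\<Sum>c\<in>?I. \<Sum>b\<in>?I. cnj (M c b) * L2_inner \<mu> (coeff_fun_entry t Y c b) (coeff_fun t Z))"
    unfolding L2_inner_def coeff_fun_apply_rows
    by (simp add: sum_distrib_right mult.assoc int Bochner_Integration.integral_sum integrable_sum)
  moreover have "L2_inner \<mu> (coeff_fun t Y) (coeff_fun t (apply_rows t (mat_adj M) Z)) =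
      (\<Sum>b\<in>?I. \<Sum>c\<in>?I. cnj (M c b) * L2_inner \<mu> (coeff_fun t Y) (coeff_fun_entry t Z b c))"
    unfolding L2_inner_def coeff_fun_apply_rows mat_adj_def
    by (simp add: sum_distrib_left mult_ac int Bochner_Integration.integral_sum integrable_sum)
  moreover have "\<dots> = (\<Sum>c\<in>?I. \<Sum>b\<in>?I. cnj (M c b) * L2_inner \<mu> (coeff_fun t Y) (coeff_fun_entry t Z b c))"
    by (rule sum.swap)
  ultimately show ?thesis
    by (simp add: right_diff_distrib sum_subtractf)
qed

(* For M = tau(V) the defect vanishes by Haar invariance; being conjugate-linear in M, it then
   also vanishes for every moment matrix. *)
lemma mat_adj_is_L2_adjoint_moment_diff:
  assumes "haar_measure_U \<mu>" "prob_measure_U \<nu>"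
  shows "mat_adj_is_L2_adjoint \<mu> t (\<lambda>a b. moment_operator \<mu> t a b - moment_operator \<nu> t a b)"
proof -
  let ?I = "multi_indices t"
  let ?X = "\<lambda>a b. moment_operator \<mu> t a b - moment_operator \<nu> t a b"
  have pm: "prob_measure_U \<mu>"
    using assms(1) by (rule haar_measure_U_imp_prob_measure_U)
  have "L2_inner \<mu> (coeff_fun t (apply_rows t ?X Y)) (coeff_fun t Z) -
      L2_inner \<mu> (coeff_fun t Y) (coeff_fun t (apply_rows t (mat_adj ?X) Z)) = 0" for Y Z
  proof -
    define \<delta> where "\<delta> c b = L2_inner \<mu> (coeff_fun_entry t Y c b) (coeff_fun t Z) -
        L2_inner \<mu> (coeff_fun t Y) (coeff_fun_entry t Z b c)" for c b
    have unitary: "(\<Sum>c\<in>?I. \<Sum>b\<in>?I. cnj (tensor_entry t V c b) * \<delta> c b) = 0"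
      if "V \<in> unitary_group" for V
      using L2_inner_apply_rows_defect[OF pm, of t "tensor_entry t V" Y Z]
        mat_adj_is_L2_adjoint_tensor_entry[OF assms(1) that]
      by (simp add: \<delta>_def mat_adj_is_L2_adjoint_def)
    have moment: "(\<Sum>c\<in>?I. \<Sum>b\<in>?I. cnj (moment_operator \<nu>' t c b) * \<delta> c b) = 0"
      if "prob_measure_U \<nu>'" for \<nu>'
    proof -
      have "(\<Sum>c\<in>?I. \<Sum>b\<in>?I. cnj (moment_operator \<nu>' t c b) * \<delta> c b) =
          (\<integral>V. (\<Sum>c\<in>?I. \<Sum>b\<in>?I. cnj (tensor_entry t V c b) * \<delta> c b) \<partial>\<nu>')"
        using integral_moment_combination[OF that] by simp
      also have "\<dots> = (\<integral>V. 0 \<partial>\<nu>')"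
        by (rule Bochner_Integration.integral_cong[OF refl]) (simp add: unitary space_prob_measure_U[OF that])
      finally show ?thesis
        by simp
    qed
    show ?thesis
      using L2_inner_apply_rows_defect[OF pm, of t ?X Y Z] moment[OF pm] moment[OF assms(2)]
      by (simp add: \<delta>_def[symmetric] left_diff_distrib sum_subtractf)
  qed
  then show ?thesis
    unfolding mat_adj_is_L2_adjoint_def by simp
qed

section \<open>Upper bound via the power trick\<close>

(* The power trick behind the spectral radius formula: for a self-adjoint S the numbers
   b k = |<S^(2^k) W, W>| satisfy b k ^ 2 <= b (k + 1) * |W|^2 by Cauchy-Schwarz, so a merely
   geometric bound b k <= K * d^(2^k) already forces b 0 <= d * |W|^2. *)
lemma squaring_chain_bound:
  fixes b :: "nat \<Rightarrow> real"
  assumes "0 \<le> s" "0 \<le> d"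
    and square: "\<And>k. (b k)\<^sup>2 \<le> b (Suc k) * s"
    and growth: "\<And>k. b k \<le> K * d ^ 2 ^ k"
  shows "b 0 \<le> d * s"
proof (rule ccontr)
  assume "\<not> b 0 \<le> d * s"
  then have gt: "d * s < b 0"
    by simp
  have s: "0 < s"
  proof (rule ccontr)
    assume "\<not> 0 < s"
    then have "(b 0)\<^sup>2 \<le> 0" "0 < (b 0)\<^sup>2"
      using square[of 0] gt \<open>0 \<le> s\<close> by auto
    then show False
      by simp
  qed
  have d: "0 < d"
    using growth[of 0] gt s \<open>0 \<le> d\<close> by (cases "d = 0") auto
  define r where "r = b 0 / (d * s)"
  have r: "1 < r"
    using gt d s by (simp add: r_def)
  have lower: "(r * d) ^ 2 ^ k * s \<le> b k" for k
  proof (induction k)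
    case 0
    show ?case
      using d s by (simp add: r_def)
  next
    case (Suc k)
    have "((r * d) ^ 2 ^ k * s)\<^sup>2 \<le> (b k)\<^sup>2"
      using Suc r d s by (intro power_mono) auto
    also have "\<dots> \<le> b (Suc k) * s"
      by (rule square)
    finally have "(r * d) ^ 2 ^ Suc k * s * s \<le> b (Suc k) * s"
      by (simp add: power_mult_distrib power2_eq_square mult_2 power_add mult_ac)
    then show ?case
      using s by simp
  qed
  have bounded: "r ^ 2 ^ k * s \<le> K" for k
    using order_trans[OF lower[of k] growth[of k]] d by (simp add: power_mult_distrib mult_ac)
  obtain n where "K / s < r ^ n"
    using real_arch_pow[OF r] by blast
  also have "\<dots> \<le> r ^ 2 ^ n"
    using r by (intro power_increasing) (auto intro: less_imp_le[OF less_exp])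
  finally show False
    using bounded[of n] s by (simp add: divide_less_eq)
qed

lemma self_adjoint_funpow_shift:
  assumes "\<And>Y Z. q (S Y) Z = q Y (S Z)"
  shows "q ((S ^^ (j + k)) Y) ((S ^^ l) Z) = q ((S ^^ j) Y) ((S ^^ (k + l)) Z)"
proof (induction k arbitrary: l)
  case 0
  show ?case by simp
next
  case (Suc k)
  have "q ((S ^^ (j + Suc k)) Y) ((S ^^ l) Z) = q ((S ^^ (j + k)) Y) ((S ^^ Suc l) Z)"
    using assms by simp
  also have "\<dots> = q ((S ^^ j) Y) ((S ^^ (k + Suc l)) Z)"
    by (rule Suc.IH)
  finally show ?case
    by simp
qed

lemma vec_norm_funpow_le:
  assumes "0 \<le> d" "\<And>Y a. vec_norm I (S Y a) \<le> d * vec_norm I (Y a)"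
  shows "vec_norm I ((S ^^ m) Y a) \<le> d ^ m * vec_norm I (Y a)"
proof (induction m)
  case 0
  show ?case by simp
next
  case (Suc m)
  have "vec_norm I ((S ^^ Suc m) Y a) \<le> d * vec_norm I ((S ^^ m) Y a)"
    using assms(2) by simp
  also have "\<dots> \<le> d * (d ^ m * vec_norm I (Y a))"
    by (rule mult_left_mono[OF Suc assms(1)])
  finally show ?case
    by (simp add: mult.assoc)
qed

definition gram_rows ::
  "nat \<Rightarrow> ('n list \<Rightarrow> 'n list \<Rightarrow> complex) \<Rightarrow> ('n::finite list \<Rightarrow> 'n list \<Rightarrow> complex) \<Rightarrow>
     'n list \<Rightarrow> 'n list \<Rightarrow> complex" where
  "gram_rows t X Y = apply_rows t (mat_adj X) (apply_rows t X Y)"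

lemma L2_inner_apply_rows_mat_adj:
  assumes "mat_adj_is_L2_adjoint \<mu> t X"
  shows "L2_inner \<mu> (coeff_fun t (apply_rows t (mat_adj X) Y)) (coeff_fun t Z) =
           L2_inner \<mu> (coeff_fun t Y) (coeff_fun t (apply_rows t X Z))"
  using assms L2_inner_cnj unfolding mat_adj_is_L2_adjoint_def by metis

lemma L2_inner_gram_rows_self_adjoint:
  assumes "mat_adj_is_L2_adjoint \<mu> t X"
  shows "L2_inner \<mu> (coeff_fun t (gram_rows t X Y)) (coeff_fun t Z) =
           L2_inner \<mu> (coeff_fun t Y) (coeff_fun t (gram_rows t X Z))"
  using assms unfolding gram_rows_def L2_inner_apply_rows_mat_adj[OF assms]
  by (simp add: mat_adj_is_L2_adjoint_def)

lemma L2_inner_gram_rows_same: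
  assumes "mat_adj_is_L2_adjoint \<mu> t X"
  shows "L2_inner \<mu> (coeff_fun t (gram_rows t X W)) (coeff_fun t W) =
           of_real ((L2_norm \<mu> (coeff_fun t (apply_rows t X W)))\<^sup>2)"
  unfolding gram_rows_def L2_inner_apply_rows_mat_adj[OF assms] by (rule L2_inner_self)

lemma L2_norm_coeff_fun_gram_rows_power_le:
  fixes X :: "'n::finite list \<Rightarrow> 'n list \<Rightarrow> complex"
  assumes "prob_measure_U \<mu>"
  shows "L2_norm \<mu> (coeff_fun t ((gram_rows t X ^^ m) W)) \<le>
           ((mat_opnorm (multi_indices t) X)\<^sup>2) ^ m * (\<Sum>a\<in>multi_indices t. vec_norm (multi_indices t) (W a))"
proof -
  let ?I = "multi_indices t :: 'n list set"
  let ?d = "(mat_opnorm ?I X)\<^sup>2"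
  have "vec_norm ?I (gram_rows t X Y a) \<le> ?d * vec_norm ?I (Y a)" for Y a
    using vec_norm_mat_vec_adj_le[of ?I X "apply_rows t X Y a"] vec_norm_mat_vec_le[of ?I X "Y a"]
      mat_opnorm_nonneg[of ?I X]
    by (simp add: gram_rows_def apply_rows_def power2_eq_square mult.assoc order_trans mult_left_mono)
  then have "vec_norm ?I ((gram_rows t X ^^ m) W a) \<le> ?d ^ m * vec_norm ?I (W a)" for a
    by (intro vec_norm_funpow_le) simp_all
  then have "(\<Sum>a\<in>?I. vec_norm ?I ((gram_rows t X ^^ m) W a)) \<le> ?d ^ m * (\<Sum>a\<in>?I. vec_norm ?I (W a))"
    unfolding sum_distrib_left by (rule sum_mono)
  then show ?thesis
    using L2_norm_coeff_fun_le[OF assms(1), of t "(gram_rows t X ^^ m) W"] by linarith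
qed

lemma L2_norm_coeff_fun_apply_rows_le:
  fixes X :: "'n::finite list \<Rightarrow> 'n list \<Rightarrow> complex" and \<mu> :: "(complex^'n^'n) measure"
  assumes pm: "prob_measure_U \<mu>" and adj: "mat_adj_is_L2_adjoint \<mu> t X"
  shows "L2_norm \<mu> (coeff_fun t (apply_rows t X W)) \<le>
           mat_opnorm (multi_indices t) X * L2_norm \<mu> (coeff_fun t W)"
proof -
  define q where "q Y Z = L2_inner \<mu> (coeff_fun t Y) (coeff_fun t Z)" for Y Z
  define n where "n Y = L2_norm \<mu> (coeff_fun t Y)" for Y
  define c where "c = mat_opnorm (multi_indices t :: 'n list set) X"
  define P where "P m = (gram_rows t X ^^ m) W" for m
  define b where "b k = cmod (q (P (2 ^ k)) W)" for k
  have c: "0 \<le> c"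
    unfolding c_def by (rule mat_opnorm_nonneg) simp
  have cs: "cmod (q Y Z) \<le> n Y * n Z" for Y Z
    unfolding q_def n_def using pm by (intro cmod_L2_inner_le continuous_intros)
  have b_0: "b 0 = (n (apply_rows t X W))\<^sup>2"
    unfolding b_def q_def n_def P_def by (simp add: L2_inner_gram_rows_same[OF adj] del: of_real_power)
  have b_Suc: "b (Suc k) = (n (P (2 ^ k)))\<^sup>2" for k
    using self_adjoint_funpow_shift[of q "gram_rows t X", of "2 ^ k" "2 ^ k" W 0 W]
      L2_inner_gram_rows_self_adjoint[OF adj]
    by (simp add: b_def q_def n_def P_def mult_2 L2_inner_self del: of_real_power)
  have "b 0 \<le> c\<^sup>2 * (n W)\<^sup>2"
  proof (rule squaring_chain_bound)
    show "(b k)\<^sup>2 \<le> b (Suc k) * (n W)\<^sup>2" for k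
      unfolding b_Suc using power_mono[OF cs[of "P (2 ^ k)" W] norm_ge_zero, of 2]
      by (simp add: b_def power_mult_distrib)
    show "b k \<le> (n W * (\<Sum>a\<in>multi_indices t. vec_norm (multi_indices t) (W a))) * (c\<^sup>2) ^ 2 ^ k" for k
    proof -
      have "b k \<le> n (P (2 ^ k)) * n W"
        unfolding b_def by (rule cs)
      also have "\<dots> \<le> ((c\<^sup>2) ^ 2 ^ k * (\<Sum>a\<in>multi_indices t. vec_norm (multi_indices t) (W a))) * n W"
        unfolding n_def P_def c_def
        by (intro mult_right_mono L2_norm_coeff_fun_gram_rows_power_le[OF pm] L2_norm_nonneg)
      finally show ?thesis
        by (simp add: mult_ac)
    qed
  qed (use c in auto)
  then have "(n (apply_rows t X W))\<^sup>2 \<le> (c * n W)\<^sup>2"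
    by (simp add: b_0 power_mult_distrib)
  then have "n (apply_rows t X W) \<le> c * n W"
    by (rule power2_le_imp_le) (simp add: c n_def)
  then show ?thesis
    unfolding n_def c_def .
qed

section \<open>Lower bound via single rows\<close>

definition single_row :: "('i \<Rightarrow> complex) \<Rightarrow> 'i \<Rightarrow> 'i \<Rightarrow> 'i \<Rightarrow> complex" where
  "single_row y i = (\<lambda>a b. if a = i then y b else 0)"

lemma coeff_fun_single_row:
  assumes "i \<in> multi_indices t"
  shows "coeff_fun t (single_row y i) U = (\<Sum>c\<in>multi_indices t. cnj (y c) * tensor_entry t U c i)"
proof -
  have "(\<Sum>c\<in>multi_indices t. cnj (single_row y i a c) * tensor_entry t U c a) =
      (if a = i then (\<Sum>c\<in>multi_indices t. cnj (y c) * tensor_entry t U c i) else 0)" for a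
    unfolding single_row_def by auto
  then show ?thesis
    unfolding coeff_fun_def using assms by simp
qed

lemma apply_rows_single_row:
  "apply_rows t M (single_row y i) = single_row (mat_vec (multi_indices t) M y) i"
  unfolding apply_rows_def single_row_def mat_vec_def by (auto simp: fun_eq_iff)

lemma sum_cmod_tensor_entry_transpose:
  assumes "U \<in> unitary_group"
  shows "(\<Sum>i\<in>multi_indices t. (cmod (\<Sum>c\<in>multi_indices t. cnj (y c) * tensor_entry t U c i))\<^sup>2) =
           (vec_norm (multi_indices t) y)\<^sup>2"
proof -
  let ?I = "multi_indices t"
  have "complex_of_real (\<Sum>i\<in>?I. (cmod (\<Sum>c\<in>?I. cnj (y c) * tensor_entry t U c i))\<^sup>2) =
      (\<Sum>i\<in>?I. \<Sum>c\<in>?I. \<Sum>d\<in>?I. cnj (y c) * y d * (tensor_entry t U c i * cnj (tensor_entry t U d i)))"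
    by (simp add: complex_norm_square sum_distrib_left sum_distrib_right mult_ac del: of_real_power)
  also have "\<dots> = (\<Sum>c\<in>?I. \<Sum>d\<in>?I. \<Sum>i\<in>?I. cnj (y c) * y d * (tensor_entry t U c i * cnj (tensor_entry t U d i)))"
    by (subst sum.swap) (rule sum.cong[OF refl], rule sum.swap)
  also have "\<dots> = (\<Sum>c\<in>?I. \<Sum>d\<in>?I. cnj (y c) * y d * (if c = d then 1 else 0))"
    by (intro sum.cong refl) (simp add: sum_distrib_left[symmetric] tensor_entry_unitary_rows[OF assms])
  also have "\<dots> = complex_of_real ((vec_norm ?I y)\<^sup>2)"
    unfolding vec_norm_def L2_set_def
    by (simp add: sum_nonneg if_distrib complex_norm_square mult.commute del: of_real_power cong: if_cong)
  finally show ?thesis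
    by (simp only: of_real_eq_iff)
qed

lemma sum_L2_norm_single_row:
  assumes "prob_measure_U \<mu>"
  shows "(\<Sum>i\<in>multi_indices t. (L2_norm \<mu> (coeff_fun t (single_row y i)))\<^sup>2) =
           (vec_norm (multi_indices t) y)\<^sup>2"
proof -
  interpret prob_space \<mu>
    using assms unfolding prob_measure_U_def by simp
  have "(\<Sum>i\<in>multi_indices t. (L2_norm \<mu> (coeff_fun t (single_row y i)))\<^sup>2) =
      (\<integral>U. (\<Sum>i\<in>multi_indices t. (cmod (coeff_fun t (single_row y i) U))\<^sup>2) \<partial>\<mu>)"
    unfolding L2_norm_power2
    by (rule Bochner_Integration.integral_sum[symmetric])
       (intro integrable_continuous_unitary[OF assms] continuous_intros)
  also have "\<dots> = (\<integral>U. (vec_norm (multi_indices t) y)\<^sup>2 \<partial>\<mu>)"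
    by (rule Bochner_Integration.integral_cong[OF refl])
       (simp add: space_prob_measure_U[OF assms] coeff_fun_single_row sum_cmod_tensor_entry_transpose)
  finally show ?thesis
    by (simp add: prob_space)
qed

lemma exists_rescaling:
  fixes a b e :: real
  assumes "0 \<le> a" "0 \<le> e" "e * a < b"
  shows "\<exists>r>0. r * a \<le> 1 \<and> e < r * b"
proof (cases "a = 0")
  case True
  then show ?thesis
    using assms by (intro exI[of _ "(e + 1) / b"]) (simp add: field_simps)
next
  case False
  then show ?thesis
    using assms by (intro exI[of _ "1 / a"]) (simp add: field_simps)
qed

lemma exists_coeff_fun_apply_rows_gt:
  assumes "prob_measure_U \<mu>" "e < mat_opnorm (multi_indices t) X"
  shows "\<exists>W. L2_norm \<mu> (coeff_fun t W) \<le> 1 \<and> e < L2_norm \<mu> (coeff_fun t (apply_rows t X W))"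
proof (cases "e < 0")
  case True
  then show ?thesis
    by (intro exI[of _ "\<lambda>a b. 0"]) (simp add: coeff_fun_def apply_rows_def mat_vec_def L2_norm_def)
next
  case False
  let ?I = "multi_indices t"
  let ?n = "\<lambda>W. L2_norm \<mu> (coeff_fun t W)"
  obtain x where x: "vec_norm ?I x \<le> 1" "e < vec_norm ?I (mat_vec ?I X x)"
    using mat_opnorm_approx[OF assms(2)] by blast
  have "(\<Sum>i\<in>?I. (e * ?n (single_row x i))\<^sup>2) = e\<^sup>2 * (vec_norm ?I x)\<^sup>2"
    by (simp add: power_mult_distrib sum_distrib_left[symmetric] sum_L2_norm_single_row[OF assms(1)])
  also have "\<dots> < (vec_norm ?I (mat_vec ?I X x))\<^sup>2"
    using x False by (intro le_less_trans[OF mult_left_le power_strict_mono]) (auto simp: power_le_one)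
  also have "\<dots> = (\<Sum>i\<in>?I. (?n (apply_rows t X (single_row x i)))\<^sup>2)"
    by (simp add: apply_rows_single_row sum_L2_norm_single_row[OF assms(1)])
  finally obtain i where "(e * ?n (single_row x i))\<^sup>2 < (?n (apply_rows t X (single_row x i)))\<^sup>2"
    by (meson not_le sum_mono)
  then have "e * ?n (single_row x i) < ?n (apply_rows t X (single_row x i))"
    by (rule power_less_imp_less_base) simp
  then obtain r where "0 < r" "r * ?n (single_row x i) \<le> 1" "e < r * ?n (apply_rows t X (single_row x i))"
    using exists_rescaling[of "?n (single_row x i)" e] False by auto
  then show ?thesis
    by (intro exI[of _ "\<lambda>a b. of_real r * single_row x i a b"])
       (simp add: apply_rows_scale coeff_fun_scale L2_norm_scale)
qed

lemma Sup_L2_norm_apply_rows_eq_mat_opnorm: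
  assumes "prob_measure_U \<mu>" "mat_adj_is_L2_adjoint \<mu> t X"
  shows "Sup {L2_norm \<mu> (coeff_fun t (apply_rows t X W)) | W. L2_norm \<mu> (coeff_fun t W) \<le> 1} =
           mat_opnorm (multi_indices t) X"
    (is "Sup ?S = ?c")
proof (rule cSup_eq_non_empty)
  show "?S \<noteq> {}"
    using exists_coeff_fun_apply_rows_gt[OF assms(1), of "-1" t X] mat_opnorm_nonneg[of "multi_indices t" X]
    by auto
  show "x \<le> ?c" if "x \<in> ?S" for x
    using that L2_norm_coeff_fun_apply_rows_le[OF assms] mat_opnorm_nonneg[of "multi_indices t" X]
    by (auto intro: order_trans mult_left_le)
  show "?c \<le> y" if ub: "\<And>x. x \<in> ?S \<Longrightarrow> x \<le> y" for y
  proof (rule ccontr)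
    assume "\<not> ?c \<le> y"
    then obtain W where "L2_norm \<mu> (coeff_fun t W) \<le> 1" "y < L2_norm \<mu> (coeff_fun t (apply_rows t X W))"
      using exists_coeff_fun_apply_rows_gt[OF assms(1), of y t X] by auto
    then show False
      using ub by fastforce
  qed
qed

theorem proposition1:
  fixes \<mu> \<nu> :: "(complex^'n::finite^'n) measure" and t :: nat
  assumes "haar_measure_U \<mu>" and "prob_measure_U \<nu>" and "t > 0"
  shows "restricted_diff_opnorm \<mu> \<nu> t =
           mat_opnorm (multi_indices t) (\<lambda>a b. moment_operator \<mu> t a b - moment_operator \<nu> t a b)"
proof -
  have pm: "prob_measure_U \<mu>"
    using assms(1) by (rule haar_measure_U_imp_prob_measure_U)
  define X where "X = (\<lambda>a b. moment_operator \<mu> t a b - moment_operator \<nu> t a b)"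
  have conv: "(\<lambda>U. conv_op \<mu> (coeff_fun t W) U - conv_op \<nu> (coeff_fun t W) U) =
      coeff_fun t (apply_rows t X W)" for W
    by (simp add: X_def fun_eq_iff conv_op_coeff_fun[OF pm] conv_op_coeff_fun[OF assms(2)]
        coeff_fun_apply_rows_diff)
  have "restricted_diff_opnorm \<mu> \<nu> t =
      Sup {L2_norm \<mu> (coeff_fun t (apply_rows t X W)) | W. L2_norm \<mu> (coeff_fun t W) \<le> 1}"
    unfolding restricted_diff_opnorm_def H_space_eq_range conv[symmetric]
    by (intro arg_cong[where f = Sup]) blast
  also have "\<dots> = mat_opnorm (multi_indices t) X"
    unfolding X_def
    by (intro Sup_L2_norm_apply_rows_eq_mat_opnorm pm mat_adj_is_L2_adjoint_moment_diff assms(1,2))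
  finally show ?thesis
    unfolding X_def .
qed

end
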